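(* ${\bf K^\boxplus}$ is sound and strongly complete with respect to the class of serial bimodal frames (those in which both $R_1$ and $R_2$ are serial): for every $\Gamma\subseteq\mathcal{L}(\boxplus)$ and $\phi\in\mathcal{L}(\boxplus)$, $\Gamma\vdash_{{\bf K^\boxplus}}\phi$ iff $\phi$ is true at every state of every serial bimodal model at which all formulas of $\Gamma$ are true.
   Context: Fix a nonempty set $\mathbf{P}$ of propositional variables. A bimodal model is $\langle S,R_1,R_2,V\rangle$ with $S$ nonempty, $R_1,R_2\subseteq S\times S$, $V:\mathbf{P}\to\mathcal{P}(S)$. Write $R_i(s)=\{t\mid sR_it\}$. $\mathcal{L}(\boxplus):\ \phi::=p\mid\neg\phi\mid(\phi\wedge\phi)\mid\boxplus\phi$. Truth: $\mathcal{M},s\vDash\boxplus\phi$ iff ($\mathcal{M},t\vDash\phi$ for all $t\in R_1(s)$) or ($\mathcal{M},u\vDash\neg\phi$ for all $u\in R_2(s)$); atoms and Booleans as usual. ${\bf K^\boxplus}$ has axioms: all instances of propositional tautologies; CON: $\boxplus\phi\wedge\boxplus\psi\to\boxplus(\phi\wedge\psi)\wedge\boxplus(\phi\vee\psi)$; DIS: $\boxplus\phi\to\boxplus(\phi\vee\psi)\vee\boxplus(\phi\wedge\chi)$; and rules: modus ponens; RN: from $\phi$ infer $\boxplus\phi\wedge\boxplus\neg\phi$; RE: from $\phi\leftrightarrow\psi$ infer $\boxplus\phi\leftrightarrow\boxplus\psi$. *)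

theory Defs
  imports Main
begin

datatype 'p fm = Atom 'p | Neg "'p fm" | Con "'p fm" "'p fm" | Bplus "'p fm"

definition Dis :: "'p fm \<Rightarrow> 'p fm \<Rightarrow> 'p fm" where
  "Dis a b = Neg (Con (Neg a) (Neg b))"
definition Imp :: "'p fm \<Rightarrow> 'p fm \<Rightarrow> 'p fm" where
  "Imp a b = Neg (Con a (Neg b))"
definition Iff :: "'p fm \<Rightarrow> 'p fm \<Rightarrow> 'p fm" where
  "Iff a b = Con (Imp a b) (Imp b a)"

fun tv :: "('p fm \<Rightarrow> bool) \<Rightarrow> 'p fm \<Rightarrow> bool" where
  "tv v (Atom p) = v (Atom p)"
| "tv v (Neg a) = (\<not> tv v a)"
| "tv v (Con a b) = (tv v a \<and> tv v b)"
| "tv v (Bplus a) = v (Bplus a)"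

definition tautology :: "'p fm \<Rightarrow> bool" where
  "tautology a \<longleftrightarrow> (\<forall>v. tv v a)"

inductive Kthm :: "'p fm \<Rightarrow> bool" where
  TAUT: "tautology a \<Longrightarrow> Kthm a"
| CON: "Kthm (Imp (Con (Bplus a) (Bplus b)) (Con (Bplus (Con a b)) (Bplus (Dis a b))))"
| DIS: "Kthm (Imp (Bplus a) (Dis (Bplus (Dis a b)) (Bplus (Con a c))))"
| MP: "Kthm (Imp a b) \<Longrightarrow> Kthm a \<Longrightarrow> Kthm b"
| RN: "Kthm a \<Longrightarrow> Kthm (Con (Bplus a) (Bplus (Neg a)))"
| RE: "Kthm (Iff a b) \<Longrightarrow> Kthm (Iff (Bplus a) (Bplus b))"

fun imps :: "'p fm list \<Rightarrow> 'p fm \<Rightarrow> 'p fm" where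
  "imps [] b = b"
| "imps (a # as) b = Imp a (imps as b)"

definition derives :: "'p fm set \<Rightarrow> 'p fm \<Rightarrow> bool" where
  "derives G a \<longleftrightarrow> (\<exists>as. set as \<subseteq> G \<and> Kthm (imps as a))"

type_synonym ('s, 'p) model = "'s set \<times> ('s \<times> 's) set \<times> ('s \<times> 's) set \<times> ('p \<Rightarrow> 's set)"

definition serial_model :: "('s, 'p) model \<Rightarrow> bool" where
  "serial_model M \<longleftrightarrow> (case M of (S, R1, R2, V) \<Rightarrow>
     S \<noteq> {} \<and> R1 \<subseteq> S \<times> S \<and> R2 \<subseteq> S \<times> S \<and> (\<forall>p. V p \<subseteq> S) \<and>
     (\<forall>s\<in>S. \<exists>t. (s, t) \<in> R1) \<and> (\<forall>s\<in>S. \<exists>t. (s, t) \<in> R2))"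

fun sat :: "('s, 'p) model \<Rightarrow> 's \<Rightarrow> 'p fm \<Rightarrow> bool" where
  "sat M s (Atom p) = (s \<in> snd (snd (snd M)) p)"
| "sat M s (Neg a) = (\<not> sat M s a)"
| "sat M s (Con a b) = (sat M s a \<and> sat M s b)"
| "sat M s (Bplus a) =
     ((\<forall>t. (s, t) \<in> fst (snd M) \<longrightarrow> sat M t a) \<or>
      (\<forall>u. (s, u) \<in> fst (snd (snd M)) \<longrightarrow> \<not> sat M u a))"

definition serial_conseq :: "'s itself \<Rightarrow> 'p fm set \<Rightarrow> 'p fm \<Rightarrow> bool" where
  "serial_conseq _ G a \<longleftrightarrow>
     (\<forall>M :: ('s, 'p) model. serial_model M \<longrightarrow>
        (\<forall>s \<in> fst M. (\<forall>b\<in>G. sat M s b) \<longrightarrow> sat M s a))"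

end

theory Submission imports Defs begin

text \<open>Soundness is a routine induction over derivations; it does not even need seriality.
Completeness uses a canonical model on maximal consistent sets. For such a set \<open>G\<close>, the
formulas \<open>a\<close> with \<open>\<boxplus>(a \<or> p) \<in> G\<close> for all \<open>p\<close> form a deductively closed filter \<open>Fs G\<close>,
and those with \<open>\<boxplus>(a \<and> p) \<in> G\<close> for all \<open>p\<close> form an ideal \<open>Is G\<close>; axiom DIS gives
\<open>\<boxplus>a \<in> G \<longleftrightarrow> a \<in> Fs G \<or> a \<in> Is G\<close>. Letting \<open>R\<^sub>1\<close> lead to the maximal consistent sets
containing \<open>Fs G\<close> and \<open>R\<^sub>2\<close> to those disjoint from \<open>Is G\<close>, the Lindenbaum lemma turns
membership in \<open>Fs G\<close> resp. \<open>Is G\<close> into the two disjuncts of the truth condition of \<open>\<boxplus>\<close>.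
These successor sets can only be empty when every \<open>\<boxplus>a\<close> lies in \<open>G\<close>; there a loop serves as
both relations, which makes every \<open>\<boxplus>a\<close> true at \<open>G\<close>.\<close>

lemma tv_Imp [simp]: "tv v (Imp a b) = (tv v a \<longrightarrow> tv v b)" by (simp add: Imp_def)
lemma tv_Dis [simp]: "tv v (Dis a b) = (tv v a \<or> tv v b)" by (simp add: Dis_def)
lemma tv_Iff [simp]: "tv v (Iff a b) = (tv v a = tv v b)" by (auto simp add: Iff_def)
lemma tv_imps [simp]: "tv v (imps as b) = ((\<forall>x\<in>set as. tv v x) \<longrightarrow> tv v b)"
  by (induction as) auto

lemma sat_Imp [simp]: "sat M s (Imp a b) = (sat M s a \<longrightarrow> sat M s b)" by (simp add: Imp_def)
lemma sat_Dis [simp]: "sat M s (Dis a b) = (sat M s a \<or> sat M s b)" by (simp add: Dis_def)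
lemma sat_Iff [simp]: "sat M s (Iff a b) = (sat M s a = sat M s b)" by (auto simp add: Iff_def)
lemma sat_imps [simp]: "sat M s (imps as b) = ((\<forall>x\<in>set as. sat M s x) \<longrightarrow> sat M s b)"
  by (induction as) auto

lemma tv_sat: "tv (sat M s) a = sat M s a"
  by (induction a) auto

lemma Kthm_valid: "Kthm a \<Longrightarrow> sat M s a"
proof (induction arbitrary: s rule: Kthm.induct)
  case (TAUT a)
  then show ?case using tv_sat[of M s a] by (simp add: tautology_def)
next
  case (CON a b) then show ?case by auto
next
  case (DIS a b c) then show ?case by auto
next
  case (RE a b) then show ?case by simp
qed auto

lemma derives_valid:
  assumes "derives G a" and "\<forall>b\<in>G. sat M s b"
  shows "sat M s a"
proof -
  obtain as where "set as \<subseteq> G" "Kthm (imps as a)" using assms(1) unfolding derives_def by blast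
  then show ?thesis using Kthm_valid[of "imps as a" M s] assms(2) by auto
qed

lemma Kthm_imps_mp: "Kthm (imps xs c) \<Longrightarrow> \<forall>x\<in>set xs. Kthm x \<Longrightarrow> Kthm c"
proof (induction xs)
  case (Cons x xs)
  then have "Kthm (imps xs c)" using MP[of x "imps xs c"] by simp
  then show ?case using Cons by simp
qed simp

lemma Kthm_tautology: "(\<And>v. tv v a) \<Longrightarrow> Kthm a"
  by (rule TAUT) (simp add: tautology_def)

lemma Kthm_prop_consequence:
  assumes "\<forall>b\<in>set bs. Kthm b" and "\<And>v. \<forall>b\<in>set bs. tv v b \<Longrightarrow> tv v c"
  shows "Kthm c"
proof -
  have "Kthm (imps bs c)" using assms(2) by (intro Kthm_tautology) simp
  then show ?thesis using assms(1) by (rule Kthm_imps_mp)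
qed

lemma derives_prop_consequence:
  assumes "\<forall>b\<in>set bs. derives G b" and "\<And>v. \<forall>b\<in>set bs. tv v b \<Longrightarrow> tv v c"
  shows "derives G c"
proof -
  obtain f where f: "\<forall>b\<in>set bs. set (f b) \<subseteq> G \<and> Kthm (imps (f b) b)"
    using bchoice[OF assms(1)[unfolded derives_def]] by blast
  define as where "as = concat (map f bs)"
  have "Kthm (imps as b)" if b: "b \<in> set bs" for b
  proof (rule Kthm_prop_consequence[of "[imps (f b) b]"])
    show "\<forall>x\<in>set [imps (f b) b]. Kthm x" using f b by simp
    have "set (f b) \<subseteq> set as" using b by (auto simp: as_def)
    then show "\<And>v. \<forall>x\<in>set [imps (f b) b]. tv v x \<Longrightarrow> tv v (imps as b)" by auto
  qed
  then have "Kthm (imps as c)"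
    using assms(2) by (intro Kthm_prop_consequence[of "map (imps as) bs"]) auto
  moreover have "set as \<subseteq> G" using f by (auto simp: as_def)
  ultimately show ?thesis unfolding derives_def by blast
qed

lemma derives_assm: "a \<in> G \<Longrightarrow> derives G a"
  unfolding derives_def
  by (intro exI[of _ "[a]"]) (auto intro: Kthm_tautology)

lemma Kthm_derives: "Kthm a \<Longrightarrow> derives G a"
  unfolding derives_def by (intro exI[of _ "[]"]) auto

lemma derives_Imp: "derives (insert b G) c \<Longrightarrow> derives G (Imp b c)"
proof -
  assume "derives (insert b G) c"
  then obtain as where as: "set as \<subseteq> insert b G" "Kthm (imps as c)"
    unfolding derives_def by blast
  define as' where "as' = filter (\<lambda>x. x \<noteq> b) as"
  have "set as' \<subseteq> G" using as(1) by (auto simp: as'_def)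
  moreover have "Kthm (imps as' (Imp b c))"
  proof (rule Kthm_prop_consequence[of "[imps as c]"])
    show "\<forall>x\<in>set [imps as c]. Kthm x" using as(2) by simp
    fix v assume "\<forall>x\<in>set [imps as c]. tv v x"
    moreover have "set as \<subseteq> insert b (set as')" by (auto simp: as'_def)
    ultimately show "tv v (imps as' (Imp b c))" by auto
  qed
  ultimately show ?thesis unfolding derives_def by blast
qed

subsection \<open>Maximal consistent sets\<close>

text \<open>The atom type is arbitrary, so falsum is built from an unspecified atom.\<close>
definition falsum :: "'p fm" where
  "falsum = Con (Atom undefined) (Neg (Atom undefined))"

lemma tv_falsum [simp]: "\<not> tv v falsum" by (simp add: falsum_def)
lemma sat_falsum [simp]: "\<not> sat M s falsum" by (simp add: falsum_def)

definition consistent :: "'p fm set \<Rightarrow> bool" where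
  "consistent G \<longleftrightarrow> \<not> derives G falsum"

definition mcs :: "'p fm set \<Rightarrow> bool" where
  "mcs G \<longleftrightarrow> consistent G \<and> (\<forall>H. G \<subseteq> H \<longrightarrow> consistent H \<longrightarrow> H = G)"

lemma consistent_insert: "\<not> derives G (Neg b) \<Longrightarrow> consistent (insert b G)"
proof (rule ccontr)
  assume "\<not> derives G (Neg b)" and "\<not> consistent (insert b G)"
  then have "derives G (Imp b falsum)" unfolding consistent_def by (blast intro: derives_Imp)
  then have "derives G (Neg b)" using derives_prop_consequence[of "[Imp b falsum]" G "Neg b"] by simp
  with \<open>\<not> derives G (Neg b)\<close> show False by blast
qed

lemma lindenbaum: assumes "consistent H" shows "\<exists>G. H \<subseteq> G \<and> mcs G"
proof -
  let ?A = "{D. H \<subseteq> D \<and> consistent D}"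
  have "\<forall>C\<in>chains ?A. \<exists>U\<in>?A. \<forall>X\<in>C. X \<subseteq> U"
  proof
    fix C assume C: "C \<in> chains ?A"
    show "\<exists>U\<in>?A. \<forall>X\<in>C. X \<subseteq> U"
    proof (cases "C = {}")
      case True then show ?thesis using assms by auto
    next
      case False
      have "consistent (\<Union>C)" unfolding consistent_def derives_def
      proof
        assume "\<exists>as. set as \<subseteq> \<Union>C \<and> Kthm (imps as falsum)"
        then obtain as where as: "set as \<subseteq> \<Union>C" "Kthm (imps as falsum)" by blast
        have ch: "subset.chain ?A C" using C by (simp add: chains_alt_def)
        obtain B where "B \<in> C" "set as \<subseteq> B"
          using finite_subset_Union_chain[OF _ as(1) False ch] by blast
        then have "derives B falsum" using as(2) unfolding derives_def by blast
        then show False using \<open>B \<in> C\<close> C unfolding chains_def consistent_def by blast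
      qed
      moreover have "H \<subseteq> \<Union>C" using False C unfolding chains_def by blast
      ultimately show ?thesis by blast
    qed
  qed
  then obtain M where "M \<in> ?A" "\<forall>X\<in>?A. M \<subseteq> X \<longrightarrow> X = M" using Zorn_Lemma2[of ?A] by blast
  then show ?thesis unfolding mcs_def by blast
qed

lemma mcs_maximal: assumes "mcs G" "consistent (insert a G)" shows "a \<in> G"
proof -
  have "\<forall>H. G \<subseteq> H \<longrightarrow> consistent H \<longrightarrow> H = G" using assms(1) by (simp add: mcs_def)
  then have "insert a G = G" using assms(2) by blast
  then show ?thesis by blast
qed

lemma mcs_derives: assumes "mcs G" "derives G a" shows "a \<in> G"
proof -
  have "\<not> derives G (Neg a)"
  proof
    assume "derives G (Neg a)"
    then have "derives G falsum"
      using assms(2) by (intro derives_prop_consequence[of "[a, Neg a]"]) auto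
    then show False using assms(1) by (simp add: mcs_def consistent_def)
  qed
  then show ?thesis by (intro mcs_maximal[OF assms(1)] consistent_insert)
qed

lemma mcs_prop_consequence:
  assumes "mcs G" "set bs \<subseteq> G" "\<And>v. \<forall>b\<in>set bs. tv v b \<Longrightarrow> tv v c"
  shows "c \<in> G"
proof -
  have "derives G c"
    using assms(2,3) by (intro derives_prop_consequence[of bs]) (auto intro: derives_assm)
  then show ?thesis by (rule mcs_derives[OF assms(1)])
qed

lemma mcs_Kthm: "mcs G \<Longrightarrow> Kthm a \<Longrightarrow> a \<in> G"
  using mcs_derives Kthm_derives by blast

lemma mcs_falsum: "mcs G \<Longrightarrow> falsum \<notin> G"
  using derives_assm[of falsum G] by (auto simp: mcs_def consistent_def)

lemma mcs_Neg: assumes "mcs G" shows "Neg a \<in> G \<longleftrightarrow> a \<notin> G"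
proof
  assume "Neg a \<in> G"
  then show "a \<notin> G"
    using mcs_falsum[OF assms] mcs_prop_consequence[OF assms, of "[a, Neg a]" falsum] by auto
next
  assume "a \<notin> G"
  then have "derives G (Neg a)" using consistent_insert mcs_maximal[OF assms] by blast
  then show "Neg a \<in> G" by (rule mcs_derives[OF assms])
qed

lemma mcs_Con: assumes "mcs G" shows "Con a b \<in> G \<longleftrightarrow> a \<in> G \<and> b \<in> G"
proof
  assume ab: "Con a b \<in> G"
  have "a \<in> G" by (rule mcs_prop_consequence[OF assms, of "[Con a b]"]) (simp_all add: ab)
  moreover have "b \<in> G" by (rule mcs_prop_consequence[OF assms, of "[Con a b]"]) (simp_all add: ab)
  ultimately show "a \<in> G \<and> b \<in> G" ..
next
  assume "a \<in> G \<and> b \<in> G"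
  then show "Con a b \<in> G" by (intro mcs_prop_consequence[OF assms, of "[a, b]"]) simp_all
qed

lemma mcs_Bplus_cong:
  assumes "mcs G" "Bplus x \<in> G" "Kthm (Iff x y)"
  shows "Bplus y \<in> G"
proof -
  have "Iff (Bplus x) (Bplus y) \<in> G" using RE[OF assms(3)] mcs_Kthm[OF assms(1)] by blast
  then show ?thesis
    using assms(2) by (intro mcs_prop_consequence[OF assms(1), of "[Iff (Bplus x) (Bplus y), Bplus x]"]) auto
qed

lemma mcs_extension:
  assumes "\<not> derives H a" shows "\<exists>D. mcs D \<and> H \<subseteq> D \<and> a \<notin> D"
proof -
  have "\<not> derives H (Neg (Neg a))"
    using assms derives_prop_consequence[of "[Neg (Neg a)]" H a] by auto
  then have "consistent (insert (Neg a) H)" by (rule consistent_insert)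
  then obtain D where D: "insert (Neg a) H \<subseteq> D" "mcs D" using lindenbaum by blast
  then have "a \<notin> D" using mcs_Neg[OF D(2)] by simp
  with D show ?thesis by blast
qed

subsection \<open>The filter and the ideal of a maximal consistent set\<close>

definition Fs :: "'p fm set \<Rightarrow> 'p fm set" where
  "Fs G = {a. \<forall>p. Bplus (Dis a p) \<in> G}"

definition Is :: "'p fm set \<Rightarrow> 'p fm set" where
  "Is G = {a. \<forall>p. Bplus (Con a p) \<in> G}"

context
  fixes G :: "'p fm set"
  assumes G: "mcs G"
begin

lemma Fs_mono: assumes "x \<in> Fs G" "Kthm (Imp x y)" shows "y \<in> Fs G"
  unfolding Fs_def
proof (intro CollectI allI)
  fix p
  have "Kthm (Iff (Dis x (Dis y p)) (Dis y p))"
    using assms(2) by (intro Kthm_prop_consequence[of "[Imp x y]"]) auto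
  moreover have "Bplus (Dis x (Dis y p)) \<in> G" using assms(1) unfolding Fs_def by blast
  ultimately show "Bplus (Dis y p) \<in> G" using mcs_Bplus_cong[OF G] by blast
qed

lemma Fs_Con: assumes "x \<in> Fs G" "y \<in> Fs G" shows "Con x y \<in> Fs G"
  unfolding Fs_def
proof (intro CollectI allI)
  fix p
  have "Bplus (Con (Dis x p) (Dis y p)) \<in> G"
    using mcs_Kthm[OF G CON[of "Dis x p" "Dis y p"]] assms unfolding Fs_def
    by (intro mcs_prop_consequence[OF G, of "[_, Bplus (Dis x p), Bplus (Dis y p)]"]) auto
  then show "Bplus (Dis (Con x y) p) \<in> G" by (rule mcs_Bplus_cong[OF G]) (auto intro: Kthm_tautology)
qed

lemma Fs_Kthm: "Kthm x \<Longrightarrow> x \<in> Fs G"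
  unfolding Fs_def
proof (intro CollectI allI)
  fix p assume "Kthm x"
  then have "Kthm (Dis x p)" by (intro Kthm_prop_consequence[of "[x]"]) auto
  then have "Con (Bplus (Dis x p)) (Bplus (Neg (Dis x p))) \<in> G" by (rule mcs_Kthm[OF G RN])
  then show "Bplus (Dis x p) \<in> G" by (simp add: mcs_Con[OF G])
qed

lemma Fs_derives: assumes "derives (Fs G) a" shows "a \<in> Fs G"
proof -
  obtain as where "set as \<subseteq> Fs G" "Kthm (imps as a)" using assms unfolding derives_def by blast
  then show ?thesis
  proof (induction as arbitrary: a)
    case Nil
    then show ?case by (simp add: Fs_Kthm)
  next
    case (Cons b as)
    have "Kthm (imps as (Imp b a))"
      using Cons.prems(2) by (intro Kthm_prop_consequence[of "[imps (b # as) a]"]) auto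
    then have "Imp b a \<in> Fs G" using Cons.prems(1) by (intro Cons.IH) auto
    then have "Con b (Imp b a) \<in> Fs G" using Cons.prems(1) by (intro Fs_Con) auto
    then show ?case by (rule Fs_mono) (auto intro: Kthm_tautology)
  qed
qed

lemma Is_antimono: assumes "x \<in> Is G" "Kthm (Imp y x)" shows "y \<in> Is G"
  unfolding Is_def
proof (intro CollectI allI)
  fix p
  have "Kthm (Iff (Con x (Con y p)) (Con y p))"
    using assms(2) by (intro Kthm_prop_consequence[of "[Imp y x]"]) auto
  moreover have "Bplus (Con x (Con y p)) \<in> G" using assms(1) unfolding Is_def by blast
  ultimately show "Bplus (Con y p) \<in> G" using mcs_Bplus_cong[OF G] by blast
qed

lemma Is_Dis: assumes "x \<in> Is G" "y \<in> Is G" shows "Dis x y \<in> Is G"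
  unfolding Is_def
proof (intro CollectI allI)
  fix p
  have "Bplus (Dis (Con x p) (Con y p)) \<in> G"
    using mcs_Kthm[OF G CON[of "Con x p" "Con y p"]] assms unfolding Is_def
    by (intro mcs_prop_consequence[OF G, of "[_, Bplus (Con x p), Bplus (Con y p)]"]) auto
  then show "Bplus (Con (Dis x y) p) \<in> G" by (rule mcs_Bplus_cong[OF G]) (auto intro: Kthm_tautology)
qed

lemma Is_falsum: "falsum \<in> Is G"
  unfolding Is_def
proof (intro CollectI allI)
  fix p :: "'p fm"
  have "Kthm (Neg (Con falsum p))" by (rule Kthm_tautology) simp
  then have "Con (Bplus (Neg (Con falsum p))) (Bplus (Neg (Neg (Con falsum p)))) \<in> G"
    by (rule mcs_Kthm[OF G RN])
  then have "Bplus (Neg (Neg (Con falsum p))) \<in> G" by (simp add: mcs_Con[OF G])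
  then show "Bplus (Con falsum p) \<in> G" by (rule mcs_Bplus_cong[OF G]) (auto intro: Kthm_tautology)
qed

lemma Is_derives: assumes "derives (Neg ` Is G) (Neg a)" shows "a \<in> Is G"
proof -
  obtain as where "set as \<subseteq> Neg ` Is G" "Kthm (imps as (Neg a))"
    using assms unfolding derives_def by blast
  then show ?thesis
  proof (induction as arbitrary: a)
    case Nil
    then have "Kthm (Imp a falsum)" by (intro Kthm_prop_consequence[of "[Neg a]"]) auto
    then show ?case by (rule Is_antimono[OF Is_falsum])
  next
    case (Cons b as)
    then obtain i where i: "b = Neg i" "i \<in> Is G" by auto
    have "Kthm (imps as (Neg (Con a (Neg i))))"
      using Cons.prems(2) i(1) by (intro Kthm_prop_consequence[of "[imps (b # as) (Neg a)]"]) auto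
    then have "Con a (Neg i) \<in> Is G" using Cons.prems(1) by (intro Cons.IH) auto
    then have "Dis (Con a (Neg i)) i \<in> Is G" using i(2) by (rule Is_Dis)
    then show ?case by (rule Is_antimono) (auto intro: Kthm_tautology)
  qed
qed

lemma mcs_Bplus: "Bplus a \<in> G \<longleftrightarrow> a \<in> Fs G \<or> a \<in> Is G"
proof
  assume a: "Bplus a \<in> G"
  show "a \<in> Fs G \<or> a \<in> Is G"
  proof (rule ccontr)
    assume "\<not> ?thesis"
    then obtain p q where "Bplus (Dis a p) \<notin> G" "Bplus (Con a q) \<notin> G"
      unfolding Fs_def Is_def by blast
    then have "Neg (Bplus (Dis a p)) \<in> G" "Neg (Bplus (Con a q)) \<in> G"
      by (simp_all add: mcs_Neg[OF G])
    moreover have "Imp (Bplus a) (Dis (Bplus (Dis a p)) (Bplus (Con a q))) \<in> G"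
      using mcs_Kthm[OF G DIS] by blast
    ultimately have "falsum \<in> G" using a
      by (intro mcs_prop_consequence[OF G, of "[Imp (Bplus a) (Dis (Bplus (Dis a p)) (Bplus (Con a q))),
        Bplus a, Neg (Bplus (Dis a p)), Neg (Bplus (Con a q))]"]) auto
    then show False using mcs_falsum[OF G] by blast
  qed
next
  assume "a \<in> Fs G \<or> a \<in> Is G"
  then have "Bplus (Dis a a) \<in> G \<or> Bplus (Con a a) \<in> G" unfolding Fs_def Is_def by blast
  moreover have "Kthm (Iff (Dis a a) a)" "Kthm (Iff (Con a a) a)" by (auto intro: Kthm_tautology)
  ultimately show "Bplus a \<in> G" using mcs_Bplus_cong[OF G] by blast
qed

lemma Fs_iff: "a \<in> Fs G \<longleftrightarrow> (\<forall>D. mcs D \<and> Fs G \<subseteq> D \<longrightarrow> a \<in> D)"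
  using mcs_extension Fs_derives by blast

lemma Is_iff: "a \<in> Is G \<longleftrightarrow> (\<forall>D. mcs D \<and> Is G \<inter> D = {} \<longrightarrow> a \<notin> D)"
proof
  assume "a \<in> Is G"
  then show "\<forall>D. mcs D \<and> Is G \<inter> D = {} \<longrightarrow> a \<notin> D" by blast
next
  assume disjoint: "\<forall>D. mcs D \<and> Is G \<inter> D = {} \<longrightarrow> a \<notin> D"
  show "a \<in> Is G"
  proof (rule ccontr)
    assume "a \<notin> Is G"
    then obtain D where D: "mcs D" "Neg ` Is G \<subseteq> D" "Neg a \<notin> D"
      using Is_derives mcs_extension by blast
    have "Is G \<inter> D = {}" using D(2) by (auto simp: mcs_Neg[OF D(1)])
    moreover have "a \<in> D" using D(3) by (simp add: mcs_Neg[OF D(1)])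
    ultimately show False using disjoint D(1) by blast
  qed
qed

end

subsection \<open>The canonical model\<close>

definition full :: "'p fm set \<Rightarrow> bool" where
  "full G \<longleftrightarrow> (\<forall>a. Bplus a \<in> G)"

definition canon_R1 :: "'p fm set \<Rightarrow> 'p fm set \<Rightarrow> bool" where
  "canon_R1 G D \<longleftrightarrow> mcs G \<and> mcs D \<and> (if full G then D = G else Fs G \<subseteq> D)"

definition canon_R2 :: "'p fm set \<Rightarrow> 'p fm set \<Rightarrow> bool" where
  "canon_R2 G D \<longleftrightarrow> mcs G \<and> mcs D \<and> (if full G then D = G else Is G \<inter> D = {})"

definition canon :: "('p fm set, 'p) model" where
  "canon = ({G. mcs G}, {(G, D). canon_R1 G D}, {(G, D). canon_R2 G D}, \<lambda>p. {G. mcs G \<and> Atom p \<in> G})"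

lemma sat_canon_Bplus:
  "sat canon G (Bplus a) \<longleftrightarrow>
    (\<forall>D. canon_R1 G D \<longrightarrow> sat canon D a) \<or> (\<forall>D. canon_R2 G D \<longrightarrow> \<not> sat canon D a)"
  by (simp add: canon_def)

lemma truth_lemma: "mcs G \<Longrightarrow> sat canon G a \<longleftrightarrow> a \<in> G"
proof (induction a arbitrary: G)
  case (Atom p) then show ?case by (simp add: canon_def)
next
  case (Neg a) then show ?case by (simp add: mcs_Neg[OF Neg.prems])
next
  case (Con a b) then show ?case by (simp add: mcs_Con[OF Con.prems])
next
  case (Bplus a)
  show ?case
  proof (cases "full G")
    case True
    then have "Bplus a \<in> G" unfolding full_def by blast
    moreover have "sat canon G (Bplus a)"
      using True Bplus.prems unfolding sat_canon_Bplus canon_R1_def canon_R2_def by simp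
    ultimately show ?thesis by blast
  next
    case False
    have "sat canon G (Bplus a) \<longleftrightarrow>
      (\<forall>D. mcs D \<and> Fs G \<subseteq> D \<longrightarrow> a \<in> D) \<or> (\<forall>D. mcs D \<and> Is G \<inter> D = {} \<longrightarrow> a \<notin> D)"
      using False Bplus unfolding sat_canon_Bplus canon_R1_def canon_R2_def by simp
    then show ?thesis
      using Fs_iff[OF Bplus.prems] Is_iff[OF Bplus.prems] mcs_Bplus[OF Bplus.prems] by simp
  qed
qed

lemma consistent_empty: "consistent ({} :: 'p fm set)"
proof -
  have "\<not> Kthm (falsum :: 'p fm)"
    using Kthm_valid[of "falsum :: 'p fm" "undefined :: (unit, 'p) model" "()"] by auto
  then show ?thesis by (simp add: consistent_def derives_def)
qed

lemma canon_R_serial: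
  assumes G: "mcs G" shows "\<exists>D. canon_R1 G D" "\<exists>D. canon_R2 G D"
proof -
  have "(\<exists>D. canon_R1 G D) \<and> (\<exists>D. canon_R2 G D)"
  proof (cases "full G")
    case True
    then show ?thesis using G unfolding canon_R1_def canon_R2_def by auto
  next
    case False
    then obtain a where "Bplus a \<notin> G" unfolding full_def by blast
    then have "a \<notin> Fs G" "a \<notin> Is G" using mcs_Bplus[OF G] by simp_all
    then obtain D1 D2 where "mcs D1" "Fs G \<subseteq> D1" "mcs D2" "Is G \<inter> D2 = {}"
      using Fs_iff[OF G] Is_iff[OF G] by blast
    then show ?thesis using G False unfolding canon_R1_def canon_R2_def by auto
  qed
  then show "\<exists>D. canon_R1 G D" "\<exists>D. canon_R2 G D" by blast+
qed

lemma canon_serial: "serial_model (canon :: ('p fm set, 'p) model)"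
proof -
  obtain G0 :: "'p fm set" where "mcs G0" using lindenbaum[OF consistent_empty] by blast
  moreover have "mcs G \<and> mcs D" if "canon_R1 G D \<or> canon_R2 G D" for G D :: "'p fm set"
    using that unfolding canon_R1_def canon_R2_def by blast
  ultimately show ?thesis
    unfolding serial_model_def canon_def using canon_R_serial by auto
qed

lemma soundness: "derives G a \<Longrightarrow> serial_conseq TYPE('s) G a"
  unfolding serial_conseq_def by (intro allI impI ballI) (rule derives_valid)

lemma completeness:
  fixes G :: "'p fm set"
  assumes "serial_conseq TYPE('p fm set) G a" shows "derives G a"
proof (rule ccontr)
  assume "\<not> derives G a"
  then obtain D where D: "mcs D" "G \<subseteq> D" "a \<notin> D" using mcs_extension by blast
  have "D \<in> fst canon" using D(1) by (simp add: canon_def)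
  moreover have "\<forall>b\<in>G. sat canon D b" using D(1,2) truth_lemma by blast
  ultimately have "sat canon D a" using assms canon_serial unfolding serial_conseq_def by blast
  then show False using D(1,3) truth_lemma by blast
qed

theorem theorem6:
  fixes G :: "'p fm set" and a :: "'p fm"
  shows "(derives G a \<longrightarrow> serial_conseq TYPE('s) G a)
       \<and> (derives G a \<longleftrightarrow> serial_conseq TYPE('p fm set) G a)"
  using soundness[of G a] soundness[of G a] completeness[of G a] by blast

end
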